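(* Let $m>0$, $\gamma>0$, $\alpha,\beta>0$, $c_k=k^{-(1+\alpha\beta)}$, $\lambda_k=k^{-\beta}$ for $k\geq1$, and let $s$ satisfy $0\leq 2s<\alpha\beta$. Then the linear map $L$ defined on $\mathcal{H}_{-s}$ by $$L(x,v,z_1,z_2,\dots)=\Big(v,\ -\tfrac{\gamma}{m}v-\tfrac1m\sum_{k\geq1}\sqrt{c_k}\,z_k,\ -\lambda_1z_1+\sqrt{c_1}\,v,\ -\lambda_2z_2+\sqrt{c_2}\,v,\ \dots\Big)$$ is a bounded linear operator from $\mathcal{H}_{-s}$ to $\mathcal{H}_{-s}$.
   Context: $\mathcal{H}_{-s}$ is the Hilbert space of real sequences $X=(x,v,z_1,z_2,\dots)$ with norm $\|X\|_{-s}^2=x^2+v^2+\sum_{k\geq1}k^{-2s}z_k^2<\infty$. *)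

theory Defs
  imports "HOL-Analysis.Analysis"
begin

text \<open>Elements of H_{-s} are triples (x, v, z) where z k stands for the
  paper's z_{k+1} (k = 0, 1, 2, ...), i.e. the paper's index k >= 1 is shifted by one.\<close>

type_synonym hseq = "real \<times> real \<times> (nat \<Rightarrow> real)"

definition wt :: "real \<Rightarrow> nat \<Rightarrow> real" where
  "wt s k = real (Suc k) powr (-2 * s)"

definition Hs :: "real \<Rightarrow> hseq set" where
  "Hs s = {(x, v, z). summable (\<lambda>k. wt s k * (z k)^2)}"

definition Hnorm :: "real \<Rightarrow> hseq \<Rightarrow> real" where
  "Hnorm s X = (case X of (x, v, z) \<Rightarrow> sqrt (x^2 + v^2 + (\<Sum>k. wt s k * (z k)^2)))"

definition hadd :: "hseq \<Rightarrow> hseq \<Rightarrow> hseq" where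
  "hadd X Y = (case X of (x, v, z) \<Rightarrow> case Y of (x', v', z') \<Rightarrow>
      (x + x', v + v', \<lambda>k. z k + z' k))"

definition hscale :: "real \<Rightarrow> hseq \<Rightarrow> hseq" where
  "hscale a X = (case X of (x, v, z) \<Rightarrow> (a * x, a * v, \<lambda>k. a * z k))"

definition ccoef :: "real \<Rightarrow> real \<Rightarrow> nat \<Rightarrow> real" where
  "ccoef \<alpha> \<beta> k = real (Suc k) powr (-(1 + \<alpha> * \<beta>))"

definition lam :: "real \<Rightarrow> nat \<Rightarrow> real" where
  "lam \<beta> k = real (Suc k) powr (-\<beta>)"

definition Lop :: "real \<Rightarrow> real \<Rightarrow> real \<Rightarrow> real \<Rightarrow> hseq \<Rightarrow> hseq" where
  "Lop m \<gamma> \<alpha> \<beta> X = (case X of (x, v, z) \<Rightarrow>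
     (v,
      - (\<gamma> / m) * v - (1 / m) * (\<Sum>k. sqrt (ccoef \<alpha> \<beta> k) * z k),
      \<lambda>k. - lam \<beta> k * z k + sqrt (ccoef \<alpha> \<beta> k) * v))"

end

theory Submission
  imports Defs
begin

text \<open>The only non-trivial term of \<open>L\<close> is the series \<open>\<Sum>k. sqrt c\<^sub>k z\<^sub>k\<close>.
  Writing \<open>sqrt c\<^sub>k z\<^sub>k = sqrt (c\<^sub>k / w\<^sub>k) \<cdot> sqrt w\<^sub>k z\<^sub>k\<close> with the weights
  \<open>w\<^sub>k = k powr (-2s)\<close> of the norm, Cauchy-Schwarz bounds its square by
  \<open>(\<Sum>k. c\<^sub>k / w\<^sub>k) \<cdot> \<parallel>X\<parallel>\<^sup>2\<close>, and \<open>c\<^sub>k / w\<^sub>k = k powr (2s - 1 - \<alpha>\<beta>)\<close> is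
  summable exactly when \<open>2s < \<alpha>\<beta>\<close>. The remaining components are controlled by
  \<open>w\<^sub>k \<le> 1\<close>, \<open>\<lambda>\<^sub>k \<le> 1\<close> and the summability of \<open>c\<^sub>k\<close>.\<close>

lemma summable_Suc_powr: "p < -1 \<Longrightarrow> summable (\<lambda>k. real (Suc k) powr p)"
  using summable_Suc_iff[where f = "\<lambda>n. real n powr p"] summable_real_powr_iff[of p] by simp

lemma summable_mult_of_square_summable:
  fixes f g :: "nat \<Rightarrow> real"
  assumes "summable (\<lambda>k. (f k)\<^sup>2)" "summable (\<lambda>k. (g k)\<^sup>2)"
  shows "summable (\<lambda>k. f k * g k)"
proof (rule summable_comparison_test')
  show "summable (\<lambda>k. ((f k)\<^sup>2 + (g k)\<^sup>2) / 2)"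
    using assms by (intro summable_divide summable_add)
  show "norm (f k * g k) \<le> ((f k)\<^sup>2 + (g k)\<^sup>2) / 2" for k
    using sum_squares_bound[of "\<bar>f k\<bar>" "\<bar>g k\<bar>"] by (simp add: abs_mult)
qed

lemma Cauchy_Schwarz_ineq_suminf:
  fixes f g :: "nat \<Rightarrow> real"
  assumes "summable (\<lambda>k. (f k)\<^sup>2)" "summable (\<lambda>k. (g k)\<^sup>2)"
  shows "(\<Sum>k. f k * g k)\<^sup>2 \<le> (\<Sum>k. (f k)\<^sup>2) * (\<Sum>k. (g k)\<^sup>2)"
proof (rule LIMSEQ_le)
  show "(\<lambda>n. (\<Sum>k<n. f k * g k)\<^sup>2) \<longlonglongrightarrow> (\<Sum>k. f k * g k)\<^sup>2"
    using summable_mult_of_square_summable[OF assms]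
    by (intro tendsto_power summable_LIMSEQ)
  show "(\<lambda>n. (\<Sum>k<n. (f k)\<^sup>2) * (\<Sum>k<n. (g k)\<^sup>2)) \<longlonglongrightarrow> (\<Sum>k. (f k)\<^sup>2) * (\<Sum>k. (g k)\<^sup>2)"
    using assms by (intro tendsto_mult summable_LIMSEQ)
  show "\<exists>N. \<forall>n\<ge>N. (\<Sum>k<n. f k * g k)\<^sup>2 \<le> (\<Sum>k<n. (f k)\<^sup>2) * (\<Sum>k<n. (g k)\<^sup>2)"
    using Cauchy_Schwarz_ineq_sum by blast
qed

lemma square_add_le: "(p + q)\<^sup>2 \<le> 2 * p\<^sup>2 + 2 * (q::real)\<^sup>2"
  using sum_squares_bound[of p q] by (simp add: power2_sum)

lemma wt_pos: "wt s k > 0"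
  by (simp add: wt_def)

lemma wt_le_1: "s \<ge> 0 \<Longrightarrow> wt s k \<le> 1"
  unfolding wt_def using powr_mono[of "-2 * s" 0 "real (Suc k)"] by simp

lemma ccoef_pos: "ccoef \<alpha> \<beta> k > 0"
  by (simp add: ccoef_def)

lemma lam_square_le_1: "\<beta> \<ge> 0 \<Longrightarrow> (lam \<beta> k)\<^sup>2 \<le> 1"
  unfolding lam_def using powr_mono[of "-\<beta>" 0 "real (Suc k)"] by (simp add: power_le_one)

lemma ccoef_div_wt: "ccoef \<alpha> \<beta> k / wt s k = real (Suc k) powr (2 * s - 1 - \<alpha> * \<beta>)"
  unfolding ccoef_def wt_def by (simp flip: powr_diff add: algebra_simps)

lemma summable_ccoef: "\<alpha> * \<beta> > 0 \<Longrightarrow> summable (ccoef \<alpha> \<beta>)"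
  unfolding ccoef_def by (rule summable_Suc_powr) simp

lemma summable_ccoef_div_wt: "2 * s < \<alpha> * \<beta> \<Longrightarrow> summable (\<lambda>k. ccoef \<alpha> \<beta> k / wt s k)"
  unfolding ccoef_div_wt by (rule summable_Suc_powr) simp

lemma suminf_ccoef_nonneg: "\<alpha> * \<beta> > 0 \<Longrightarrow> 0 \<le> (\<Sum>k. ccoef \<alpha> \<beta> k)"
  using summable_ccoef ccoef_pos by (intro suminf_nonneg less_imp_le)

lemma suminf_ccoef_div_wt_nonneg: "2 * s < \<alpha> * \<beta> \<Longrightarrow> 0 \<le> (\<Sum>k. ccoef \<alpha> \<beta> k / wt s k)"
  using summable_ccoef_div_wt ccoef_pos wt_pos by (intro suminf_nonneg less_imp_le divide_pos_pos)

lemma Hs_iff: "(x, v, z) \<in> Hs s \<longleftrightarrow> summable (\<lambda>k. wt s k * (z k)\<^sup>2)"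
  by (simp add: Hs_def)

lemma Hnorm_eq: "Hnorm s (x, v, z) = sqrt (x\<^sup>2 + v\<^sup>2 + (\<Sum>k. wt s k * (z k)\<^sup>2))"
  by (simp add: Hnorm_def)

lemma sqrt_ccoef_mult_eq:
  "sqrt (ccoef \<alpha> \<beta> k) * z k = sqrt (ccoef \<alpha> \<beta> k / wt s k) * (sqrt (wt s k) * z k)"
  using wt_pos[of s k] by (simp add: real_sqrt_divide)

lemma
  assumes "2 * s < \<alpha> * \<beta>" "summable (\<lambda>k. wt s k * (z k)\<^sup>2)"
  shows summable_sqrt_ccoef_mult: "summable (\<lambda>k. sqrt (ccoef \<alpha> \<beta> k) * z k)"
    and square_suminf_sqrt_ccoef_mult_le:
      "(\<Sum>k. sqrt (ccoef \<alpha> \<beta> k) * z k)\<^sup>2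
         \<le> (\<Sum>k. ccoef \<alpha> \<beta> k / wt s k) * (\<Sum>k. wt s k * (z k)\<^sup>2)"
proof -
  have f: "(sqrt (ccoef \<alpha> \<beta> k / wt s k))\<^sup>2 = ccoef \<alpha> \<beta> k / wt s k"
    and g: "(sqrt (wt s k) * z k)\<^sup>2 = wt s k * (z k)\<^sup>2" for k
    using ccoef_pos[of \<alpha> \<beta> k] wt_pos[of s k] by (simp_all add: power_mult_distrib)
  note sq = summable_ccoef_div_wt[OF assms(1)] assms(2)
  show "summable (\<lambda>k. sqrt (ccoef \<alpha> \<beta> k) * z k)"
    using summable_mult_of_square_summable[of "\<lambda>k. sqrt (ccoef \<alpha> \<beta> k / wt s k)"
        "\<lambda>k. sqrt (wt s k) * z k"] sq
    unfolding f g sqrt_ccoef_mult_eq[of \<alpha> \<beta> _ z s, symmetric] by blast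
  show "(\<Sum>k. sqrt (ccoef \<alpha> \<beta> k) * z k)\<^sup>2
         \<le> (\<Sum>k. ccoef \<alpha> \<beta> k / wt s k) * (\<Sum>k. wt s k * (z k)\<^sup>2)"
    using Cauchy_Schwarz_ineq_suminf[of "\<lambda>k. sqrt (ccoef \<alpha> \<beta> k / wt s k)"
        "\<lambda>k. sqrt (wt s k) * z k"] sq
    unfolding f g sqrt_ccoef_mult_eq[of \<alpha> \<beta> _ z s, symmetric] by blast
qed

lemma wt_mult_Lop_square_le:
  assumes "s \<ge> 0" "\<beta> \<ge> 0"
  shows "wt s k * (- lam \<beta> k * z k + sqrt (ccoef \<alpha> \<beta> k) * v)\<^sup>2
           \<le> 2 * (wt s k * (z k)\<^sup>2) + 2 * v\<^sup>2 * ccoef \<alpha> \<beta> k"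
proof -
  have w: "0 < wt s k" "wt s k \<le> 1"
    using wt_pos wt_le_1[OF assms(1)] by auto
  have c: "0 < ccoef \<alpha> \<beta> k"
    by (rule ccoef_pos)
  have "(- lam \<beta> k * z k + sqrt (ccoef \<alpha> \<beta> k) * v)\<^sup>2
          \<le> 2 * (lam \<beta> k)\<^sup>2 * (z k)\<^sup>2 + 2 * ccoef \<alpha> \<beta> k * v\<^sup>2"
    using square_add_le[of "- lam \<beta> k * z k" "sqrt (ccoef \<alpha> \<beta> k) * v"] c
    by (simp add: power_mult_distrib)
  also have "\<dots> \<le> 2 * (z k)\<^sup>2 + 2 * ccoef \<alpha> \<beta> k * v\<^sup>2"
    using mult_right_mono[OF lam_square_le_1[OF assms(2)], of "(z k)\<^sup>2"] by simp
  finally have "wt s k * (- lam \<beta> k * z k + sqrt (ccoef \<alpha> \<beta> k) * v)\<^sup>2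
                  \<le> wt s k * (2 * (z k)\<^sup>2 + 2 * ccoef \<alpha> \<beta> k * v\<^sup>2)"
    using w by (simp add: mult_left_mono)
  also have "\<dots> \<le> 2 * (wt s k * (z k)\<^sup>2) + 2 * v\<^sup>2 * ccoef \<alpha> \<beta> k"
    using mult_right_mono[OF w(2), of "2 * ccoef \<alpha> \<beta> k * v\<^sup>2"] c
    by (simp add: distrib_left mult.commute mult.left_commute)
  finally show ?thesis .
qed

lemma
  assumes "s \<ge> 0" "\<beta> \<ge> 0" "\<alpha> * \<beta> > 0" "summable (\<lambda>k. wt s k * (z k)\<^sup>2)"
  shows summable_wt_mult_Lop_square:
      "summable (\<lambda>k. wt s k * (- lam \<beta> k * z k + sqrt (ccoef \<alpha> \<beta> k) * v)\<^sup>2)"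
    and suminf_wt_mult_Lop_square_le:
      "(\<Sum>k. wt s k * (- lam \<beta> k * z k + sqrt (ccoef \<alpha> \<beta> k) * v)\<^sup>2)
         \<le> 2 * (\<Sum>k. wt s k * (z k)\<^sup>2) + 2 * v\<^sup>2 * (\<Sum>k. ccoef \<alpha> \<beta> k)"
proof -
  have bound: "summable (\<lambda>k. 2 * (wt s k * (z k)\<^sup>2) + 2 * v\<^sup>2 * ccoef \<alpha> \<beta> k)"
    using assms(4) summable_ccoef[OF assms(3)] by (intro summable_add summable_mult)
  show sum: "summable (\<lambda>k. wt s k * (- lam \<beta> k * z k + sqrt (ccoef \<alpha> \<beta> k) * v)\<^sup>2)"
    using wt_mult_Lop_square_le[OF assms(1,2), of _ z \<alpha> v]
    by (intro summable_comparison_test'[OF bound]) (simp add: abs_mult wt_pos abs_of_pos)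
  have "(\<Sum>k. wt s k * (- lam \<beta> k * z k + sqrt (ccoef \<alpha> \<beta> k) * v)\<^sup>2)
          \<le> (\<Sum>k. 2 * (wt s k * (z k)\<^sup>2) + 2 * v\<^sup>2 * ccoef \<alpha> \<beta> k)"
    by (rule suminf_le[OF wt_mult_Lop_square_le[OF assms(1,2), of _ z \<alpha> v] sum bound])
  also have "\<dots> = 2 * (\<Sum>k. wt s k * (z k)\<^sup>2) + 2 * v\<^sup>2 * (\<Sum>k. ccoef \<alpha> \<beta> k)"
    using assms(4) summable_ccoef[OF assms(3)]
    by (simp add: suminf_add [symmetric] summable_mult suminf_mult)
  finally show "(\<Sum>k. wt s k * (- lam \<beta> k * z k + sqrt (ccoef \<alpha> \<beta> k) * v)\<^sup>2)
         \<le> 2 * (\<Sum>k. wt s k * (z k)\<^sup>2) + 2 * v\<^sup>2 * (\<Sum>k. ccoef \<alpha> \<beta> k)" .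
qed

lemma Lop_in_Hs:
  assumes "s \<ge> 0" "\<beta> \<ge> 0" "\<alpha> * \<beta> > 0" "X \<in> Hs s"
  shows "Lop m \<gamma> \<alpha> \<beta> X \<in> Hs s"
  using assms summable_wt_mult_Lop_square[OF assms(1-3)] by (auto simp: Hs_def Lop_def)

lemma suminf_mult_linear:
  fixes h f g :: "nat \<Rightarrow> real"
  assumes "summable (\<lambda>k. h k * f k)" "summable (\<lambda>k. h k * g k)"
  shows "(\<Sum>k. h k * (a * f k + b * g k)) = a * (\<Sum>k. h k * f k) + b * (\<Sum>k. h k * g k)"
proof -
  have "(\<Sum>k. h k * (a * f k + b * g k)) = (\<Sum>k. a * (h k * f k) + b * (h k * g k))"
    by (simp add: algebra_simps)
  also have "\<dots> = a * (\<Sum>k. h k * f k) + b * (\<Sum>k. h k * g k)"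
    using assms by (simp add: suminf_add [symmetric] summable_mult suminf_mult)
  finally show ?thesis .
qed

lemma Lop_linear:
  assumes "2 * s < \<alpha> * \<beta>" "X \<in> Hs s" "Y \<in> Hs s"
  shows "Lop m \<gamma> \<alpha> \<beta> (hadd (hscale a X) (hscale b Y))
           = hadd (hscale a (Lop m \<gamma> \<alpha> \<beta> X)) (hscale b (Lop m \<gamma> \<alpha> \<beta> Y))"
proof -
  obtain x v z x' v' z' where XY: "X = (x, v, z)" "Y = (x', v', z')"
    by (cases X, cases Y) auto
  have "(\<Sum>k. sqrt (ccoef \<alpha> \<beta> k) * (a * z k + b * z' k)) =
          a * (\<Sum>k. sqrt (ccoef \<alpha> \<beta> k) * z k) + b * (\<Sum>k. sqrt (ccoef \<alpha> \<beta> k) * z' k)"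
    using assms XY
    by (intro suminf_mult_linear summable_sqrt_ccoef_mult[OF assms(1)]) (auto simp: Hs_iff)
  then show ?thesis
    unfolding XY by (simp add: Lop_def hadd_def hscale_def algebra_simps add_divide_distrib)
qed

text \<open>The bound holds for every \<open>m\<close>: for \<open>m = 0\<close> the division junk makes the
  second component of \<open>L X\<close> vanish.\<close>
lemma Hnorm_Lop_le:
  assumes "s \<ge> 0" "\<beta> \<ge> 0" "2 * s < \<alpha> * \<beta>" "X \<in> Hs s"
  shows "Hnorm s (Lop m \<gamma> \<alpha> \<beta> X)
           \<le> sqrt (3 + 2 * (\<gamma> / m)\<^sup>2 + 2 * (\<Sum>k. ccoef \<alpha> \<beta> k / wt s k) / m\<^sup>2
                    + 2 * (\<Sum>k. ccoef \<alpha> \<beta> k)) * Hnorm s X"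
    (is "_ \<le> sqrt ?C * _")
proof -
  obtain x v z where X: "X = (x, v, z)"
    by (cases X) auto
  have ab: "\<alpha> * \<beta> > 0"
    using assms by linarith
  have sum: "summable (\<lambda>k. wt s k * (z k)\<^sup>2)"
    using assms(4) X by (simp add: Hs_iff)
  define A where "A = (\<Sum>k. ccoef \<alpha> \<beta> k / wt s k)"
  define D where "D = (\<Sum>k. ccoef \<alpha> \<beta> k)"
  define B where "B = (\<Sum>k. wt s k * (z k)\<^sup>2)"
  define S where "S = (\<Sum>k. sqrt (ccoef \<alpha> \<beta> k) * z k)"
  define T where "T = (\<Sum>k. wt s k * (- lam \<beta> k * z k + sqrt (ccoef \<alpha> \<beta> k) * v)\<^sup>2)"
  have A0: "A \<ge> 0" and D0: "D \<ge> 0"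
    unfolding A_def D_def using suminf_ccoef_div_wt_nonneg[OF assms(3)] suminf_ccoef_nonneg[OF ab] .
  have B0: "B \<ge> 0"
    unfolding B_def using sum wt_pos[THEN less_imp_le] by (intro suminf_nonneg mult_nonneg_nonneg) simp_all
  have S2: "S\<^sup>2 \<le> A * B"
    unfolding S_def A_def B_def by (rule square_suminf_sqrt_ccoef_mult_le[OF assms(3) sum])
  have T: "T \<le> 2 * B + 2 * v\<^sup>2 * D"
    unfolding T_def B_def D_def by (rule suminf_wt_mult_Lop_square_le[OF assms(1,2) ab sum])
  define N where "N = x\<^sup>2 + v\<^sup>2 + B"
  have vN: "v\<^sup>2 \<le> N" and BN: "B \<le> N"
    unfolding N_def using B0 by auto
  have "(- (\<gamma> / m) * v - (1 / m) * S)\<^sup>2 \<le> 2 * (\<gamma> / m)\<^sup>2 * v\<^sup>2 + 2 * S\<^sup>2 / m\<^sup>2"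
    using sum_squares_bound[of "(\<gamma> / m) * v" "S / m"]
    by (simp add: power2_diff power_mult_distrib power_divide)
  also have "\<dots> \<le> 2 * (\<gamma> / m)\<^sup>2 * N + 2 * A * N / m\<^sup>2"
    using vN S2 mult_left_mono[OF BN A0]
    by (intro add_mono mult_left_mono divide_right_mono) auto
  finally have M: "(- (\<gamma> / m) * v - (1 / m) * S)\<^sup>2 \<le> 2 * (\<gamma> / m)\<^sup>2 * N + 2 * A * N / m\<^sup>2" .
  have "v\<^sup>2 + (- (\<gamma> / m) * v - (1 / m) * S)\<^sup>2 + T \<le> ?C * N"
    using vN BN M T mult_right_mono[OF vN D0] unfolding A_def [symmetric] D_def [symmetric]
    by (simp add: algebra_simps)
  then have "sqrt (v\<^sup>2 + (- (\<gamma> / m) * v - (1 / m) * S)\<^sup>2 + T) \<le> sqrt ?C * sqrt N"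
    by (simp flip: real_sqrt_mult)
  then show ?thesis
    unfolding X Lop_def N_def B_def S_def T_def by (simp add: Hnorm_eq)
qed

theorem proposition3p1:
  fixes m \<gamma> \<alpha> \<beta> s :: real
  assumes "m > 0" "\<gamma> > 0" "\<alpha> > 0" "\<beta> > 0"
    and "0 \<le> 2 * s" "2 * s < \<alpha> * \<beta>"
  shows "(\<forall>x v z. (x, v, z) \<in> Hs s \<longrightarrow>
            summable (\<lambda>k. sqrt (ccoef \<alpha> \<beta> k) * z k))
       \<and> (\<forall>X \<in> Hs s. Lop m \<gamma> \<alpha> \<beta> X \<in> Hs s)
       \<and> (\<forall>X \<in> Hs s. \<forall>Y \<in> Hs s. \<forall>a b.
            Lop m \<gamma> \<alpha> \<beta> (hadd (hscale a X) (hscale b Y))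
              = hadd (hscale a (Lop m \<gamma> \<alpha> \<beta> X)) (hscale b (Lop m \<gamma> \<alpha> \<beta> Y)))
       \<and> (\<exists>C \<ge> 0. \<forall>X \<in> Hs s. Hnorm s (Lop m \<gamma> \<alpha> \<beta> X) \<le> C * Hnorm s X)"
proof -
  have s: "s \<ge> 0" and \<beta>: "\<beta> \<ge> 0" and ab: "\<alpha> * \<beta> > 0"
    using assms by auto
  have "0 \<le> sqrt (3 + 2 * (\<gamma> / m)\<^sup>2 + 2 * (\<Sum>k. ccoef \<alpha> \<beta> k / wt s k) / m\<^sup>2
                  + 2 * (\<Sum>k. ccoef \<alpha> \<beta> k))"
    using suminf_ccoef_div_wt_nonneg[OF assms(6)] suminf_ccoef_nonneg[OF ab] by simp
  then have "\<exists>C \<ge> 0. \<forall>X \<in> Hs s. Hnorm s (Lop m \<gamma> \<alpha> \<beta> X) \<le> C * Hnorm s X"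
    using Hnorm_Lop_le[OF s \<beta> assms(6)] by blast
  then show ?thesis
    using summable_sqrt_ccoef_mult[OF assms(6)] Lop_in_Hs[OF s \<beta> ab] Lop_linear[OF assms(6)]
    by (auto simp: Hs_iff)
qed

end
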